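(* (a) Let $p$ be a prime and let $W\subset \mathbb{Z}_p$ be a nonempty set of residues with \[ |W| < \frac{p-1}{2} - \frac{\log p}{\log (4/3)}. \] Then there exist sets $U,V\subset\mathbb{Z}_p$ forming a prime-compatible pair modulo $p$ with $W\subset U$ and $W\subset V$. (b) Let $p\ge 7$ be a prime. Then there exist sets $U,V\subset\mathbb{Z}_p$ forming a prime-compatible pair modulo $p$ such that the residues of $1$ and $11$ lie in $U\setminus V$, the residue of $6$ lies in $V\setminus U$, and $|U\cap V|=2$.
   Context: $\mathbb{Z}_p$ denotes the integers modulo $p$ and $\mathbb{Z}_p^*$ its nonzero residues. For a prime $p$ and nonempty sets $U,V\subset\mathbb{Z}_p$, the pair $U,V$ is called a prime-compatible pair (modulo $p$) if $(U\setminus V)-(V\setminus U)=\{u-v: u\in U\setminus V,\ v\in V\setminus U\}$ equals $\mathbb{Z}_p^*$. *)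

theory Defs
  imports "HOL-Computational_Algebra.Primes" Complex_Main
begin

text \<open>Residues modulo p are represented by the integers 0, ..., p-1;
  a subset of Z_p is a subset of {0..<p}. Difference in Z_p is (u - v) mod p,
  and Z_p^* is {1..<p}.\<close>

definition prime_compatible :: "int \<Rightarrow> int set \<Rightarrow> int set \<Rightarrow> bool" where
  "prime_compatible p U V \<longleftrightarrow>
     U \<subseteq> {0..<p} \<and> V \<subseteq> {0..<p} \<and> U \<noteq> {} \<and> V \<noteq> {} \<and>
     {(u - v) mod p | u v. u \<in> U - V \<and> v \<in> V - U} = {1..<p}"

end

theory Submission
  imports Defs
begin

(* For (a), let C be the complement of W and split C into A and C - A; then U = W \<union> A and
   V = W \<union> (C - A) form a prime-compatible pair as soon as every d \<noteq> 0 is a difference a - b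
   with a \<in> A and b \<in> C - A.  Walking along the progression 0, d, 2d, ... one finds
   n \<ge> |C| - (p + 1)/2 pairwise disjoint pairs {b, b + d} inside C, and each of them rules out
   one of the four patterns of A on it, so at most (3/4)^n 2^|C| < 2^|C|/p choices of A miss d.
   A union bound over the p - 1 values of d leaves a good A.
   For (b), {0, -1} against a set containing all odd residues in [1, p - 2] realises every
   nonzero difference; adding (p - 1)/2 to the second set, the common residues 2 and -3 to
   both, and applying the bijection x \<mapsto> 1 - 10 x of Z_p gives the required pair. *)

lemma inj_on_affine_mod:
  fixes p a c :: int
  assumes "coprime p c"
  shows "inj_on (\<lambda>x. (a + c * x) mod p) {0..<p}"
proof (rule inj_onI)
  fix x y assume xy: "x \<in> {0..<p}" "y \<in> {0..<p}" and "(a + c * x) mod p = (a + c * y) mod p"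
  then have "p dvd c * (x - y)"
    by (simp add: mod_eq_dvd_iff algebra_simps)
  with assms have "x mod p = y mod p"
    by (simp add: coprime_dvd_mult_right_iff mod_eq_dvd_iff)
  with xy show "x = y" by simp
qed

lemma mult_mod_image_units:
  fixes p c :: int
  assumes "coprime p c"
  shows "(\<lambda>x. (c * x) mod p) ` {1..<p} = {1..<p}"
proof (rule endo_inj_surj)
  have inj: "inj_on (\<lambda>x. (c * x) mod p) {0..<p}"
    using inj_on_affine_mod[OF assms, of 0] by simp
  then show "inj_on (\<lambda>x. (c * x) mod p) {1..<p}"
    by (rule inj_on_subset) auto
  show "(\<lambda>x. (c * x) mod p) ` {1..<p} \<subseteq> {1..<p}"
  proof (rule image_subsetI)
    fix x assume x: "x \<in> {1..<p}"
    then have "(c * x) mod p \<noteq> (c * 0) mod p"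
      using inj_onD[OF inj, of x 0] by auto
    moreover have "0 \<le> (c * x) mod p" "(c * x) mod p < p" using x by simp_all
    ultimately show "(c * x) mod p \<in> {1..<p}" by simp
  qed
qed simp

lemma prime_compatible_disjointI:
  fixes p :: int
  assumes "1 < p" "U \<subseteq> {0..<p}" "V \<subseteq> {0..<p}" "U \<inter> V = {}"
    and realized: "\<And>d. d \<in> {1..<p} \<Longrightarrow> \<exists>u\<in>U. \<exists>v\<in>V. (u - v) mod p = d"
  shows "prime_compatible p U V"
proof -
  have "U \<noteq> {}" "V \<noteq> {}" using realized[of 1] assms(1) by auto
  moreover have "(u - v) mod p \<in> {1..<p}" if "u \<in> U" "v \<in> V" for u v
  proof -
    have "u \<noteq> v" "u \<in> {0..<p}" "v \<in> {0..<p}" using that assms(2-4) by auto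
    then have "u mod p \<noteq> v mod p" by simp
    then have "(u - v) mod p \<noteq> 0" by (simp add: mod_eq_dvd_iff dvd_eq_mod_eq_0)
    moreover have "0 \<le> (u - v) mod p" "(u - v) mod p < p" using assms(1) by simp_all
    ultimately show ?thesis by simp
  qed
  moreover have "U - V = U" "V - U = V" using assms(4) by auto
  ultimately show ?thesis
    using assms(2,3) realized unfolding prime_compatible_def by fastforce
qed

lemma prime_compatible_Un_common:
  assumes "prime_compatible p U V" "T \<subseteq> {0..<p}" "T \<inter> (U - V) = {}" "T \<inter> (V - U) = {}"
  shows "prime_compatible p (U \<union> T) (V \<union> T)"
proof -
  have "(U \<union> T) - (V \<union> T) = U - V" "(V \<union> T) - (U \<union> T) = V - U"
    using assms(3,4) by auto
  then show ?thesis using assms(1,2) by (simp add: prime_compatible_def)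
qed

lemma prime_compatible_affine_image:
  fixes p a c :: int
  assumes "coprime p c" "prime_compatible p U V"
  defines "f \<equiv> \<lambda>x. (a + c * x) mod p"
  shows "prime_compatible p (f ` U) (f ` V)"
proof -
  have UV: "U \<subseteq> {0..<p}" "V \<subseteq> {0..<p}" "U \<noteq> {}" "V \<noteq> {}"
    and diffs: "{(u - v) mod p | u v. u \<in> U - V \<and> v \<in> V - U} = {1..<p}"
    using assms(2) by (simp_all add: prime_compatible_def)
  have inj: "inj_on f {0..<p}" unfolding f_def by (rule inj_on_affine_mod[OF assms(1)])
  have diff_images: "f ` U - f ` V = f ` (U - V)" "f ` V - f ` U = f ` (V - U)"
    using inj_on_image_set_diff[OF inj] UV by (metis Diff_subset order_trans)+
  have key: "(f u - f v) mod p = (c * ((u - v) mod p)) mod p" for u v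
  proof -
    have "(f u - f v) mod p = (c * (u - v)) mod p"
      unfolding f_def by (metis mod_diff_eq add_diff_cancel_left right_diff_distrib)
    then show ?thesis by (simp add: mod_mult_right_eq)
  qed
  have "{(x - y) mod p | x y. x \<in> f ` U - f ` V \<and> y \<in> f ` V - f ` U}
      = (\<lambda>d. (c * d) mod p) ` {(u - v) mod p | u v. u \<in> U - V \<and> v \<in> V - U}"
  proof (intro equalityI subsetI)
    fix z assume "z \<in> {(x - y) mod p | x y. x \<in> f ` U - f ` V \<and> y \<in> f ` V - f ` U}"
    then obtain u v where "u \<in> U - V" "v \<in> V - U" "z = (f u - f v) mod p"
      unfolding diff_images by blast
    then show "z \<in> (\<lambda>d. (c * d) mod p) ` {(u - v) mod p | u v. u \<in> U - V \<and> v \<in> V - U}"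
      unfolding key by blast
  next
    fix z assume "z \<in> (\<lambda>d. (c * d) mod p) ` {(u - v) mod p | u v. u \<in> U - V \<and> v \<in> V - U}"
    then obtain u v where "u \<in> U - V" "v \<in> V - U" "z = (c * ((u - v) mod p)) mod p"
      by blast
    then show "z \<in> {(x - y) mod p | x y. x \<in> f ` U - f ` V \<and> y \<in> f ` V - f ` U}"
      unfolding diff_images key[symmetric] by blast
  qed
  also have "\<dots> = {1..<p}" using diffs mult_mod_image_units[OF assms(1)] by simp
  finally show ?thesis
    using UV by (auto simp: prime_compatible_def f_def)
qed

lemma prime_compatible_ends_odds:
  fixes p :: int
  assumes "odd p" "1 < p" "{j \<in> {1..p - 2}. odd j} \<subseteq> S" "S \<subseteq> {1..p - 2}"
  shows "prime_compatible p {0, p - 1} S"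
proof (rule prime_compatible_disjointI)
  fix d assume d: "d \<in> {1..<p}"
  show "\<exists>u\<in>{0, p - 1}. \<exists>v\<in>S. (u - v) mod p = d"
  proof (cases "even d")
    case True
    then have "d \<noteq> 1" by auto
    with True d assms(1) have "p - d \<in> {j \<in> {1..p - 2}. odd j}"
      by (auto simp: order_le_less)
    moreover have "(0 - (p - d)) mod p = d" using d by (simp add: mod_pos_pos_trivial)
    ultimately show ?thesis using assms(3) by blast
  next
    case False
    with assms(1) have "d \<noteq> p - 1" by auto
    with False d assms(1) have "p - 1 - d \<in> {j \<in> {1..p - 2}. odd j}"
      by (auto simp: order_le_less)
    moreover have "(p - 1 - (p - 1 - d)) mod p = d" using d by simp
    ultimately show ?thesis using assms(3) by blast
  qed
qed (use assms in auto)

lemma prime_compatible_1_11_6: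
  fixes p :: int
  assumes "prime p" "7 \<le> p"
  shows "\<exists>U V. prime_compatible p U V \<and> 1 mod p \<in> U - V \<and> 11 mod p \<in> U - V \<and>
           6 mod p \<in> V - U \<and> card (U \<inter> V) = 2"
proof -
  have "odd p" using assms prime_odd_int by fastforce
  define h where "h = (p - 1) div 2"
  have h: "p = 2 * h + 1" using \<open>odd p\<close> by (simp add: h_def)
  define X where "X = {0, p - 1} \<union> {2, p - 3}"
  define Y where "Y = insert h {j \<in> {1..p - 2}. odd j} \<union> {2, p - 3}"
  have base: "prime_compatible p X Y"
    unfolding X_def Y_def
    by (rule prime_compatible_Un_common[OF prime_compatible_ends_odds])
      (use assms h in auto)
  have XY: "X \<subseteq> {0..<p}" "Y \<subseteq> {0..<p}" "X - Y = {0, p - 1}" "h \<in> Y - X" "X \<inter> Y = {2, p - 3}"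
    using assms h by (auto simp: X_def Y_def)
  have "\<not> p dvd 2" "\<not> p dvd 5" using assms(2) by (auto dest: zdvd_imp_le)
  then have "\<not> p dvd 2 * 5" using assms(1) prime_dvd_mult_iff by blast
  then have cop: "coprime p (-10)" using assms(1) by (simp add: prime_imp_coprime)
  define f where "f x = (1 + (-10) * x) mod p" for x
  have inj: "inj_on f {0..<p}"
    unfolding f_def by (rule inj_on_affine_mod[OF cop])
  have "prime_compatible p (f ` X) (f ` Y)"
    unfolding f_def by (rule prime_compatible_affine_image[OF cop base])
  moreover have "f ` X - f ` Y = f ` {0, p - 1}" "f ` Y - f ` X = f ` (Y - X)"
    using inj_on_image_set_diff[OF inj] XY by (metis Diff_subset order_trans)+
  moreover have "card (f ` X \<inter> f ` Y) = 2"
    unfolding inj_on_image_Int[OF inj XY(1,2), symmetric] XY(5)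
    using card_image[OF inj_on_subset[OF inj, of "{2, p - 3}"]] assms(2) by simp
  moreover have "f 0 = 1 mod p" "f (p - 1) = 11 mod p" "f h = 6 mod p"
  proof -
    have "f (p - 1) = (11 + (-10) * p) mod p" "f h = (6 + (-5) * p) mod p"
      unfolding f_def by (simp_all add: algebra_simps h)
    then show "f 0 = 1 mod p" "f (p - 1) = 11 mod p" "f h = 6 mod p"
      by (simp_all only: mod_mult_self1) (simp add: f_def)
  qed
  ultimately show ?thesis
    using XY(4) by (metis image_eqI insertCI)
qed

lemma card_subsets_closed_under_pairs:
  fixes P :: "('a \<times> 'a) set"
  assumes "finite P" "finite C"
    and "\<And>x y. (x, y) \<in> P \<Longrightarrow> x \<in> C \<and> y \<in> C \<and> x \<noteq> y"
    and "\<And>x y x' y'. (x, y) \<in> P \<Longrightarrow> (x', y') \<in> P \<Longrightarrow> (x, y) \<noteq> (x', y') \<Longrightarrow>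
           {x, y} \<inter> {x', y'} = {}"
  shows "4 ^ card P * card {A \<in> Pow C. \<forall>(x, y)\<in>P. y \<in> A \<longrightarrow> x \<in> A}
           = 3 ^ card P * 2 ^ card C"
  using assms
proof (induction P arbitrary: C rule: finite_induct)
  case empty
  then show ?case using card_Pow[of C] by (simp add: Pow_def)
next
  case (insert xy P)
  obtain x y where xy: "xy = (x, y)" by fastforce
  let ?F = "\<lambda>P C. {A \<in> Pow C. \<forall>(x, y)\<in>P. y \<in> A \<longrightarrow> x \<in> A}"
  define C' where "C' = C - {x, y}"
  have x_y: "x \<in> C" "y \<in> C" "x \<noteq> y" using insert.prems(2) xy by auto
  have P_C': "x' \<in> C' \<and> y' \<in> C' \<and> x' \<noteq> y'" if "(x', y') \<in> P" for x' y'
    using that insert.prems(2)[of x' y'] insert.prems(3)[of x y x' y'] insert.hyps(2) xy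
    by (auto simp: C'_def)
  have IH: "4 ^ card P * card (?F P C') = 3 ^ card P * 2 ^ card C'"
    using insert.IH[of C'] insert.prems P_C' by (auto simp: C'_def)
  have "bij_betw (\<lambda>A. (A \<inter> C', A \<inter> {x, y})) (?F (insert xy P) C)
          (?F P C' \<times> {T \<in> Pow {x, y}. y \<in> T \<longrightarrow> x \<in> T})"
  proof (rule bij_betw_byWitness[where f' = "\<lambda>(B, T). B \<union> T"])
    show "(\<lambda>A. (A \<inter> C', A \<inter> {x, y})) ` ?F (insert xy P) C
            \<subseteq> ?F P C' \<times> {T \<in> Pow {x, y}. y \<in> T \<longrightarrow> x \<in> T}"
      using P_C' xy by (fastforce simp: C'_def)
    show "(\<lambda>(B, T). B \<union> T) ` (?F P C' \<times> {T \<in> Pow {x, y}. y \<in> T \<longrightarrow> x \<in> T})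
            \<subseteq> ?F (insert xy P) C"
      using P_C' xy x_y by (fastforce simp: C'_def)
  qed (auto simp: C'_def)
  moreover have "{T \<in> Pow {x, y}. y \<in> T \<longrightarrow> x \<in> T} = {{}, {x}, {x, y}}"
    by auto
  ultimately have "card (?F (insert xy P) C) = card (?F P C') * 3"
    using x_y by (simp add: bij_betw_same_card card_cartesian_product)
  moreover have "card C = card C' + 2"
    using x_y insert.prems(1) card_mono[of C "{x, y}"] by (simp add: C'_def card_Diff_subset)
  ultimately show ?case
    using IH insert.hyps by (simp add: power_add)
qed

lemma card_consecutive_pairs:
  fixes K :: "int set" and n :: int
  assumes "K \<subseteq> {0..<n}"
  shows "2 * card K \<le> card {j \<in> K. j + 1 \<in> K} + nat n + 1"
proof -
  let ?K' = "(\<lambda>j. j - 1) ` K"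
  have fin: "finite K" "finite ?K'" using assms finite_subset by blast+
  have "card ?K' = card K" by (simp add: card_image inj_on_def)
  moreover have "{j \<in> K. j + 1 \<in> K} = K \<inter> ?K'" by force
  moreover have "card (K \<union> ?K') \<le> nat n + 1"
  proof -
    have "K \<union> ?K' \<subseteq> {-1..<n}" using assms by auto
    then have "card (K \<union> ?K') \<le> card {-1..<n}" by (rule card_mono[rotated]) simp
    then show ?thesis by simp
  qed
  ultimately show ?thesis using card_Un_Int[OF fin] by simp
qed

lemma obtain_same_parity_subset:
  fixes E :: "int set"
  assumes "finite E"
  obtains J where "J \<subseteq> E" "\<And>i j. i \<in> J \<Longrightarrow> j \<in> J \<Longrightarrow> even i = even j" "card E \<le> 2 * card J"
proof -
  let ?Ev = "{j \<in> E. even j}" and ?Od = "{j \<in> E. odd j}"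
  have "E = ?Ev \<union> ?Od" by auto
  then have "card E = card ?Ev + card ?Od"
    using card_Un_disjoint[of ?Ev ?Od] assms by auto
  then consider "card E \<le> 2 * card ?Ev" | "card E \<le> 2 * card ?Od" by linarith
  then show ?thesis by cases (rule that; auto)+
qed

lemma obtain_disjoint_shift_pairs:
  fixes p d :: int and C :: "int set"
  assumes "coprime p d" "C \<subseteq> {0..<p}"
  defines "\<sigma> \<equiv> \<lambda>b. (b + d) mod p"
  obtains B where "B \<subseteq> C" "\<sigma> ` B \<subseteq> C" "\<sigma> ` B \<inter> B = {}"
    "2 * card C \<le> 2 * card B + nat p + 1"
proof -
  \<comment> \<open>Along the progression \<open>\<phi>\<close>, adding d is the step j \<mapsto> j + 1; pairs starting at indices
    of equal parity are disjoint.\<close>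
  define \<phi> where "\<phi> j = (d * j) mod p" for j
  have inj: "inj_on \<phi> {0..<p}"
    using inj_on_affine_mod[OF assms(1), of 0] by (simp add: \<phi>_def[abs_def])
  have surj: "\<phi> ` {0..<p} = {0..<p}"
    by (rule endo_inj_surj) (use inj in \<open>auto simp: \<phi>_def intro: pos_mod_bound\<close>)
  have \<sigma>_\<phi>: "\<sigma> (\<phi> j) = \<phi> (j + 1)" for j
    by (simp add: \<sigma>_def \<phi>_def mod_add_left_eq distrib_left)
  define K where "K = {j \<in> {0..<p}. \<phi> j \<in> C}"
  have "\<phi> ` K = C"
  proof
    show "C \<subseteq> \<phi> ` K"
    proof
      fix x assume "x \<in> C"
      then obtain j where "j \<in> {0..<p}" "x = \<phi> j" using surj assms(2) by blast
      with \<open>x \<in> C\<close> show "x \<in> \<phi> ` K" by (auto simp: K_def)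
    qed
  qed (auto simp: K_def)
  moreover have K_sub: "K \<subseteq> {0..<p}" by (auto simp: K_def)
  ultimately have card_K: "card K = card C"
    using card_image[OF inj_on_subset[OF inj]] by metis
  have fin: "finite {j \<in> K. j + 1 \<in> K}"
    using K_sub by (simp add: finite_subset)
  obtain J where J: "J \<subseteq> {j \<in> K. j + 1 \<in> K}"
    "\<And>i j. i \<in> J \<Longrightarrow> j \<in> J \<Longrightarrow> even i = even j" "card {j \<in> K. j + 1 \<in> K} \<le> 2 * card J"
    using obtain_same_parity_subset[OF fin] by blast
  show ?thesis
  proof
    show "\<phi> ` J \<subseteq> C" "\<sigma> ` \<phi> ` J \<subseteq> C"
      using J(1) by (auto simp: K_def \<sigma>_\<phi>)
    show "\<sigma> ` \<phi> ` J \<inter> \<phi> ` J = {}"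
    proof (rule ccontr)
      assume "\<sigma> ` \<phi> ` J \<inter> \<phi> ` J \<noteq> {}"
      then obtain i j where "i \<in> J" "j \<in> J" "\<phi> (i + 1) = \<phi> j" by (auto simp: \<sigma>_\<phi>)
      moreover have "i + 1 \<in> {0..<p}" "j \<in> {0..<p}" using J(1) K_sub \<open>i \<in> J\<close> \<open>j \<in> J\<close> by auto
      ultimately have "i + 1 = j" using inj by (auto dest: inj_onD)
      then show False using J(2)[OF \<open>i \<in> J\<close> \<open>j \<in> J\<close>] by auto
    qed
    have "card (\<phi> ` J) = card J"
      using J(1) K_sub by (intro card_image inj_on_subset[OF inj]) auto
    then show "2 * card C \<le> 2 * card (\<phi> ` J) + nat p + 1"
      using card_consecutive_pairs[of K p] J(3) card_K K_sub by simp
  qed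
qed

lemma card_subsets_missing_difference:
  fixes p d :: int and C :: "int set"
  assumes "coprime p d" "C \<subseteq> {0..<p}"
  obtains n where "2 * card C \<le> 2 * n + nat p + 1"
    "4 ^ n * card {A \<in> Pow C. \<forall>b\<in>C - A. (b + d) mod p \<notin> A} \<le> 3 ^ n * 2 ^ card C"
proof -
  let ?\<sigma> = "\<lambda>b. (b + d) mod p"
  let ?F = "\<lambda>P. {A \<in> Pow C. \<forall>(x, y)\<in>P. y \<in> A \<longrightarrow> x \<in> A}"
  obtain B where B: "B \<subseteq> C" "?\<sigma> ` B \<subseteq> C" "?\<sigma> ` B \<inter> B = {}"
    "2 * card C \<le> 2 * card B + nat p + 1"
    by (rule obtain_disjoint_shift_pairs[OF assms])
  have fin: "finite C" "finite B"
    using assms(2) B(1) by (auto intro: finite_subset)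
  have "inj_on (\<lambda>b. (d + 1 * b) mod p) {0..<p}" by (rule inj_on_affine_mod) simp
  then have "inj_on ?\<sigma> {0..<p}" by (simp add: add.commute)
  then have inj_\<sigma>: "inj_on ?\<sigma> C" using assms(2) by (rule inj_on_subset)
  define P where "P = (\<lambda>b. (b, ?\<sigma> b)) ` B"
  have card_P: "card P = card B" unfolding P_def by (rule card_image) (simp add: inj_on_def)
  have count: "4 ^ card P * card (?F P) = 3 ^ card P * 2 ^ card C"
  proof (rule card_subsets_closed_under_pairs)
    show "finite P" "finite C" using fin by (simp_all add: P_def)
    show "x \<in> C \<and> y \<in> C \<and> x \<noteq> y" if "(x, y) \<in> P" for x y
    proof -
      from that obtain b where "b \<in> B" "x = b" "y = ?\<sigma> b" by (auto simp: P_def)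
      with B(1-3) show ?thesis by blast
    qed
    show "{x, y} \<inter> {x', y'} = {}"
      if "(x, y) \<in> P" "(x', y') \<in> P" "(x, y) \<noteq> (x', y')" for x y x' y'
    proof -
      from that obtain b b' where "b \<in> B" "b' \<in> B" "b \<noteq> b'"
        "x = b" "y = ?\<sigma> b" "x' = b'" "y' = ?\<sigma> b'" by (auto simp: P_def)
      moreover have "?\<sigma> b \<noteq> ?\<sigma> b'"
        using inj_onD[OF inj_\<sigma>] B(1) \<open>b \<in> B\<close> \<open>b' \<in> B\<close> \<open>b \<noteq> b'\<close> by blast
      ultimately show ?thesis using B(3) by blast
    qed
  qed
  have "{A \<in> Pow C. \<forall>b\<in>C - A. ?\<sigma> b \<notin> A} \<subseteq> ?F P"
    using B(1) by (auto simp: P_def)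
  then have "card {A \<in> Pow C. \<forall>b\<in>C - A. ?\<sigma> b \<notin> A} \<le> card (?F P)"
    using fin(1) by (intro card_mono) simp_all
  then have "4 ^ card B * card {A \<in> Pow C. \<forall>b\<in>C - A. ?\<sigma> b \<notin> A} \<le> 4 ^ card B * card (?F P)"
    by (rule mult_le_mono2)
  also have "\<dots> = 3 ^ card B * 2 ^ card C" using count card_P by simp
  finally show ?thesis by (rule that[OF B(4)])
qed

lemma card_subsets_missing_difference_le:
  fixes p d :: int and C :: "int set"
  assumes "prime p" "C \<subseteq> {0..<p}" "d \<in> {1..<p}"
    and large: "ln (real_of_int p) / ln (4 / 3) < real (card C) - (real_of_int p + 1) / 2"
  shows "real (card {A \<in> Pow C. \<forall>b\<in>C - A. (b + d) mod p \<notin> A}) * real_of_int p \<le> 2 ^ card C"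
proof -
  let ?N = "card {A \<in> Pow C. \<forall>b\<in>C - A. (b + d) mod p \<notin> A}"
  have "\<not> p dvd d" using assms(3) by (auto dest: zdvd_imp_le)
  then have "coprime p d" by (rule prime_imp_coprime[OF assms(1)])
  then obtain n where n: "2 * card C \<le> 2 * n + nat p + 1" "4 ^ n * ?N \<le> 3 ^ n * 2 ^ card C"
    using card_subsets_missing_difference assms(2) by blast
  have p_pos: "0 < p" using assms(3) by simp
  have "real (2 * card C) \<le> real (2 * n + nat p + 1)"
    using n(1) by (simp only: of_nat_le_iff)
  then have "real (card C) - (real_of_int p + 1) / 2 \<le> real n"
    using p_pos by (simp add: field_simps)
  with large have "ln (real_of_int p) / ln (4 / 3) < real n" by (rule less_le_trans)
  then have "ln (real_of_int p) < real n * ln (4 / 3)"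
    by (simp add: pos_divide_less_eq)
  also have "\<dots> = ln ((4 / 3) ^ n)" by (simp add: ln_realpow)
  finally have "real_of_int p < (4 / 3) ^ n"
    using p_pos by simp
  then have "real ?N * real_of_int p \<le> real ?N * (4 / 3) ^ n"
    by (simp add: mult_left_mono)
  also have "\<dots> = real (4 ^ n * ?N) / 3 ^ n" by (simp add: power_divide)
  also have "\<dots> \<le> real (3 ^ n * 2 ^ card C) / 3 ^ n"
    using n(2) by (intro divide_right_mono) (simp_all only: of_nat_le_iff, simp)
  also have "\<dots> = 2 ^ card C" by simp
  finally show ?thesis .
qed

lemma obtain_subset_realizing_all_differences:
  fixes p :: int and C :: "int set"
  assumes "prime p" "C \<subseteq> {0..<p}"
    and large: "ln (real_of_int p) / ln (4 / 3) < real (card C) - (real_of_int p + 1) / 2"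
  obtains A where "A \<subseteq> C" "\<And>d. d \<in> {1..<p} \<Longrightarrow> \<exists>b\<in>C - A. (b + d) mod p \<in> A"
proof -
  define Bad where "Bad d = {A \<in> Pow C. \<forall>b\<in>C - A. (b + d) mod p \<notin> A}" for d
  have p_gt_1: "1 < p" using assms(1) by (rule prime_gt_1_int)
  have fin: "finite C" using assms(2) finite_subset by blast
  have "real (card (\<Union>d\<in>{1..<p}. Bad d)) \<le> (\<Sum>d\<in>{1..<p}. real (card (Bad d)))"
    using card_UN_le[of "{1..<p}" Bad] by (simp flip: of_nat_sum)
  also have "\<dots> \<le> (\<Sum>d\<in>{1..<p}. 2 ^ card C / real_of_int p)"
  proof (rule sum_mono)
    fix d assume "d \<in> {1..<p}"
    then show "real (card (Bad d)) \<le> 2 ^ card C / real_of_int p"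
      using card_subsets_missing_difference_le[OF assms(1,2) _ large] p_gt_1
      unfolding Bad_def by (simp add: pos_le_divide_eq)
  qed
  also have "\<dots> = (real_of_int p - 1) * (2 ^ card C / real_of_int p)"
    using p_gt_1 by simp
  also have "\<dots> < 2 ^ card C"
    using p_gt_1 by (simp add: field_simps)
  also have "\<dots> = real (card (Pow C))" using fin by (simp add: card_Pow)
  finally have "card (\<Union>d\<in>{1..<p}. Bad d) < card (Pow C)" by linarith
  then have "(\<Union>d\<in>{1..<p}. Bad d) \<noteq> Pow C" by auto
  moreover have "(\<Union>d\<in>{1..<p}. Bad d) \<subseteq> Pow C" by (auto simp: Bad_def)
  ultimately have "(\<Union>d\<in>{1..<p}. Bad d) \<subset> Pow C" by (simp add: psubset_eq)
  then obtain A where "A \<in> Pow C - (\<Union>d\<in>{1..<p}. Bad d)"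
    using psubset_imp_ex_mem by blast
  then have A: "A \<subseteq> C" "\<And>d. d \<in> {1..<p} \<Longrightarrow> A \<notin> Bad d" by auto
  show ?thesis
  proof (rule that[OF A(1)])
    fix d assume "d \<in> {1..<p}"
    with A show "\<exists>b\<in>C - A. (b + d) mod p \<in> A" by (auto simp: Bad_def)
  qed
qed

lemma prime_compatible_containing_small_set:
  fixes p :: int and W :: "int set"
  assumes "prime p" "W \<subseteq> {0..<p}"
    and small: "real (card W) < (real_of_int p - 1) / 2 - ln (real_of_int p) / ln (4 / 3)"
  shows "\<exists>U V. prime_compatible p U V \<and> W \<subseteq> U \<and> W \<subseteq> V"
proof -
  have p_gt_1: "1 < p" using assms(1) by (rule prime_gt_1_int)
  define C where "C = {0..<p} - W"
  have C_sub: "C \<subseteq> {0..<p}" by (auto simp: C_def)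
  have "card C = nat p - card W"
    using card_Diff_subset[OF finite_subset[OF assms(2)] assms(2)] by (simp add: C_def)
  moreover have "card W \<le> nat p"
    using card_mono[OF _ assms(2)] by simp
  ultimately have "real (card C) = real_of_int p - real (card W)"
    using p_gt_1 by simp
  with small have "ln (real_of_int p) / ln (4 / 3) < real (card C) - (real_of_int p + 1) / 2"
    by argo
  then obtain A where A: "A \<subseteq> C" "\<And>d. d \<in> {1..<p} \<Longrightarrow> \<exists>b\<in>C - A. (b + d) mod p \<in> A"
    using obtain_subset_realizing_all_differences[OF assms(1) C_sub] by blast
  have "prime_compatible p A (C - A)"
  proof (rule prime_compatible_disjointI)
    fix d assume "d \<in> {1..<p}"
    then obtain b where b: "b \<in> C - A" "(b + d) mod p \<in> A" using A(2) by blast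
    have "((b + d) mod p - b) mod p = d"
      using \<open>d \<in> {1..<p}\<close> by (simp add: mod_diff_left_eq)
    with b show "\<exists>u\<in>A. \<exists>v\<in>C - A. (u - v) mod p = d" by blast
  qed (use p_gt_1 A(1) C_sub in auto)
  then have "prime_compatible p (A \<union> W) ((C - A) \<union> W)"
    by (rule prime_compatible_Un_common) (use assms(2) A(1) in \<open>auto simp: C_def\<close>)
  then show ?thesis by blast
qed

theorem mainTheorem4:
  shows "(\<forall>(p::int) W. prime p \<longrightarrow> W \<subseteq> {0..<p} \<longrightarrow> W \<noteq> {} \<longrightarrow>
            real (card W) < (real_of_int p - 1) / 2 - ln (real_of_int p) / ln (4 / 3) \<longrightarrow>
            (\<exists>U V. prime_compatible p U V \<and> W \<subseteq> U \<and> W \<subseteq> V))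
       \<and> (\<forall>(p::int). prime p \<longrightarrow> p \<ge> 7 \<longrightarrow>
            (\<exists>U V. prime_compatible p U V \<and>
               1 mod p \<in> U - V \<and> 11 mod p \<in> U - V \<and> 6 mod p \<in> V - U \<and>
               card (U \<inter> V) = 2))"
  using prime_compatible_containing_small_set prime_compatible_1_11_6 by blast

end
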